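(* Let $f:\{0,1\}^n\to\{0,1\}$ be a boolean function that depends on all $n$ input bits and satisfies $Q_E^{na}(f)=n/2$. Then there exists $x\in\{0,1\}^n$ such that $d(x,y)=n/2$ for all $y\in S_f^\perp$.
   Context: Addition of bit strings is in $\mathbb Z_2^n$ (bitwise mod 2). A function $f$ depends on bit $i$ if there is an $x$ with $f(x)\ne f(x+e_i)$, where $e_i$ is the bit string with 1 in position $i$ and 0 elsewhere. $S_f:=\{z\in\{0,1\}^n: f(x)=f(x+z)\ \text{for all } x\}$, a subspace of $\mathbb F_2^n$; $S^\perp=\{x: x\cdot s=0\bmod 2 \text{ for all } s\in S\}$. $d(x,y)$ is the Hamming distance. Nonadaptive exact quantum query model: let $\mathcal H_{\rm in}$ have orthonormal basis $|0\rangle,\dots,|n\rangle$ and let the oracle $O_x$ act by $|i\rangle\mapsto(-1)^{x_i}|i\rangle$ with convention $x_0=0$. A nonadaptive quantum algorithm making $k$ queries consists of an input-independent state $|\psi\rangle\in\mathcal H_{\rm in}^{\otimes k}\otimes\mathcal H_{\rm work}$ (with $\mathcal H_{\rm work}$ a finite-dimensional workspace), to which $O_x^{\otimes k}\otimes I$ is applied, followed by an input-independent two-outcome measurement with outcomes labelled $0,1$. It computes $f$ exactly if for every $x$ the outcome is $f(x)$ with probability $1$. $Q_E^{na}(f)$ is the minimum such $k$. *)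

theory Defs
  imports Complex_Main
begin

text \<open>Bit strings in {0,1}^n are boolean lists of length n (True = 1).
  Bit i of the paper (1 \<le> i \<le> n) is list position i-1.
  A boolean function is f :: bool list \<Rightarrow> bool, only its values on lists of
  length n matter.\<close>

definition bitstrings :: "nat \<Rightarrow> bool list set" where
  "bitstrings n = {x. length x = n}"

definition xor_bits :: "bool list \<Rightarrow> bool list \<Rightarrow> bool list" where
  "xor_bits x y = map2 (\<noteq>) x y"

definition unit_bits :: "nat \<Rightarrow> nat \<Rightarrow> bool list" where
  "unit_bits n i = map (\<lambda>j. j = i) [0..<n]"

definition depends_on :: "nat \<Rightarrow> (bool list \<Rightarrow> bool) \<Rightarrow> nat \<Rightarrow> bool" where
  "depends_on n f i \<longleftrightarrow> (\<exists>x\<in>bitstrings n. f x \<noteq> f (xor_bits x (unit_bits n i)))"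

definition depends_on_all :: "nat \<Rightarrow> (bool list \<Rightarrow> bool) \<Rightarrow> bool" where
  "depends_on_all n f \<longleftrightarrow> (\<forall>i<n. depends_on n f i)"

definition S_f :: "nat \<Rightarrow> (bool list \<Rightarrow> bool) \<Rightarrow> bool list set" where
  "S_f n f = {z\<in>bitstrings n. \<forall>x\<in>bitstrings n. f x = f (xor_bits x z)}"

definition dot_bits :: "bool list \<Rightarrow> bool list \<Rightarrow> nat" where
  "dot_bits x s = card {i. i < length x \<and> x ! i \<and> s ! i}"

definition perp :: "nat \<Rightarrow> bool list set \<Rightarrow> bool list set" where
  "perp n S = {x\<in>bitstrings n. \<forall>s\<in>S. even (dot_bits x s)}"

definition hamming :: "bool list \<Rightarrow> bool list \<Rightarrow> nat" where
  "hamming x y = card {i. i < length x \<and> x ! i \<noteq> y ! i}"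

text \<open>H_in has basis |0>,...,|n>. The space H_in^{\<otimes>k} \<otimes> H_work (with
  H_work = C^m, m \<ge> 1) has orthonormal basis indexed by pairs (is, w)
  with is a list of length k of query indices in {0..n} and w < m.
  Vectors and operators are functions on this finite index set.\<close>

definition idx :: "nat \<Rightarrow> nat \<Rightarrow> nat \<Rightarrow> (nat list \<times> nat) set" where
  "idx n k m = {(is, w). length is = k \<and> set is \<subseteq> {0..n} \<and> w < m}"

text \<open>Oracle O_x: |i> \<mapsto> (-1)^{x_i}, x_0 = 0, x_i = bit i (list position i-1).\<close>
definition oracle_bit :: "bool list \<Rightarrow> nat \<Rightarrow> bool" where
  "oracle_bit x i = (i \<noteq> 0 \<and> x ! (i - 1))"

text \<open>Diagonal entry of O_x^{\<otimes>k} \<otimes> I at basis vector (is, w).\<close>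
definition query_phase :: "bool list \<Rightarrow> nat list \<Rightarrow> complex" where
  "query_phase x is = (\<Prod>i\<leftarrow>is. if oracle_bit x i then -1 else 1)"

definition query_state ::
  "bool list \<Rightarrow> (nat list \<times> nat \<Rightarrow> complex) \<Rightarrow> (nat list \<times> nat \<Rightarrow> complex)" where
  "query_state x \<psi> = (\<lambda>(is, w). query_phase x is * \<psi> (is, w))"

definition sq_norm :: "'i set \<Rightarrow> ('i \<Rightarrow> complex) \<Rightarrow> real" where
  "sq_norm I v = (\<Sum>a\<in>I. (cmod (v a))\<^sup>2)"

definition qform :: "'i set \<Rightarrow> ('i \<Rightarrow> 'i \<Rightarrow> complex) \<Rightarrow> ('i \<Rightarrow> complex) \<Rightarrow> complex" where
  "qform I M v = (\<Sum>a\<in>I. \<Sum>b\<in>I. cnj (v a) * M a b * v b)"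

text \<open>A two-outcome measurement is a POVM {I - M, M} (outcome 0, outcome 1),
  i.e. 0 \<le> M \<le> I as operators. (Over C, real nonnegative quadratic form
  forces M to be Hermitian.)\<close>
definition povm_effect :: "'i set \<Rightarrow> ('i \<Rightarrow> 'i \<Rightarrow> complex) \<Rightarrow> bool" where
  "povm_effect I M \<longleftrightarrow> (\<forall>v. qform I M v \<in> \<real> \<and> 0 \<le> Re (qform I M v)
                                 \<and> Re (qform I M v) \<le> sq_norm I v)"

definition prob_one :: "'i set \<Rightarrow> ('i \<Rightarrow> 'i \<Rightarrow> complex) \<Rightarrow> ('i \<Rightarrow> complex) \<Rightarrow> real" where
  "prob_one I M v = Re (qform I M v)"

definition na_exact_computes ::
  "nat \<Rightarrow> (bool list \<Rightarrow> bool) \<Rightarrow> nat \<Rightarrow> nat \<Rightarrow> (nat list \<times> nat \<Rightarrow> complex)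
     \<Rightarrow> (nat list \<times> nat \<Rightarrow> nat list \<times> nat \<Rightarrow> complex) \<Rightarrow> bool" where
  "na_exact_computes n f k m \<psi> M \<longleftrightarrow>
     0 < m \<and> sq_norm (idx n k m) \<psi> = 1 \<and> povm_effect (idx n k m) M \<and>
     (\<forall>x\<in>bitstrings n. prob_one (idx n k m) M (query_state x \<psi>) = (if f x then 1 else 0))"

definition QE_na :: "nat \<Rightarrow> (bool list \<Rightarrow> bool) \<Rightarrow> nat" where
  "QE_na n f = (LEAST k. \<exists>m \<psi> M. na_exact_computes n f k m \<psi> M)"

end

theory Submission
  imports Defs
begin

(* Write chi_z(v) = (-1)^(z.v) for the Walsh characters of F_2^n.
   A nonadaptive k-query algorithm applies to a basis vector a = (is, w) the
   phase chi_x(P a), where P a is the parity vector of the queried indices is;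
   its weight is at most k.  Let p a = |psi a|^2 and D the distribution of P a.
   Exactness forces the output states for inputs x, y with f x ~= f y to be
   orthogonal, and their inner product is the Fourier coefficient
   g(x+y) = sum_a p a chi_(x+y)(P a).  Hence g vanishes outside S_f, so
   (i)  D is invariant under translation by S_f^perp (Fourier inversion), and
   (ii) if f depends on all bits, g(e_i) = 0 for all i; summing over i gives
        sum_a p a (n - 2 |P a|) = 0 with nonnegative terms when n = 2k, so every
        parity in the support of D has weight exactly n/2.
   Taking x in the support of D, all points x + y (y in S_f^perp) lie in the
   support, so d(x, y) = |x + y| = n/2.  The file develops bit strings and
   Walsh characters, query phases, the linear algebra of exact measurements,
   the existence of some exact algorithm (so that QE_na is attained), and the
   analysis of an exact algorithm in the locale exact_na_algorithm, where p, P,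
   D and g are basis_prob, parity, parity_dist and correlation; the corollary
   applies it to an optimal algorithm. *)

section \<open>Bit strings\<close>

lemma length_xor_bits [simp]: "length (xor_bits x y) = min (length x) (length y)"
  by (simp add: xor_bits_def)

lemma nth_xor_bits [simp]: "i < length x \<Longrightarrow> i < length y \<Longrightarrow> xor_bits x y ! i = (x!i \<noteq> y!i)"
  by (simp add: xor_bits_def)

lemma length_unit_bits [simp]: "length (unit_bits n i) = n"
  by (simp add: unit_bits_def)

lemma nth_unit_bits [simp]: "j < n \<Longrightarrow> unit_bits n i ! j = (j = i)"
  by (simp add: unit_bits_def)

lemma xor_bits_comm: "xor_bits x y = xor_bits y x"
  by (intro nth_equalityI) auto

lemma xor_bits_cancel: "length x = length y \<Longrightarrow> xor_bits x (xor_bits x y) = y"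
  by (intro nth_equalityI) auto

lemma xor_bits_eq_zero_iff:
  "length x = n \<Longrightarrow> length y = n \<Longrightarrow> (xor_bits x y = replicate n False) = (x = y)"
  by (auto simp: list_eq_iff_nth_eq)

lemma xor_bits_in_bitstrings:
  "x \<in> bitstrings n \<Longrightarrow> y \<in> bitstrings n \<Longrightarrow> xor_bits x y \<in> bitstrings n"
  by (simp add: bitstrings_def)

lemma finite_bitstrings [simp]: "finite (bitstrings n)"
  using finite_lists_length_eq[of "UNIV::bool set" n] by (simp add: bitstrings_def)

lemma card_bitstrings: "card (bitstrings n) = 2 ^ n"
  using card_lists_length_eq[of "UNIV::bool set" n] by (simp add: bitstrings_def)

lemma bitstrings_Suc: "bitstrings (Suc n) = (\<lambda>(b, v). b # v) ` (UNIV \<times> bitstrings n)"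
  unfolding bitstrings_def by (auto simp: length_Suc_conv image_iff)

definition weight :: "bool list \<Rightarrow> nat" where
  "weight v = card {i. i < length v \<and> v!i}"

lemma weight_xor_le: "length u = length v \<Longrightarrow> weight (xor_bits u v) \<le> weight u + weight v"
proof -
  assume len: "length u = length v"
  have "{i. i < length (xor_bits u v) \<and> xor_bits u v ! i}
          \<subseteq> {i. i < length u \<and> u!i} \<union> {i. i < length v \<and> v!i}"
    using len by auto
  then have "weight (xor_bits u v) \<le> card ({i. i < length u \<and> u!i} \<union> {i. i < length v \<and> v!i})"
    unfolding weight_def by (intro card_mono) auto
  also have "\<dots> \<le> weight u + weight v"
    unfolding weight_def by (rule card_Un_le)
  finally show ?thesis .
qed

lemma weight_unit_bits_le: "weight (unit_bits n j) \<le> 1"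
proof -
  have "{i. i < length (unit_bits n j) \<and> unit_bits n j ! i} \<subseteq> {j}" by auto
  then have "weight (unit_bits n j) \<le> card {j}"
    unfolding weight_def by (intro card_mono) auto
  then show ?thesis by simp
qed

lemma hamming_eq_weight: "length x = length y \<Longrightarrow> hamming x y = weight (xor_bits x y)"
  unfolding hamming_def weight_def by (intro arg_cong[where f=card]) auto

section \<open>Walsh characters\<close>

definition walsh :: "bool list \<Rightarrow> bool list \<Rightarrow> real" where
  "walsh z v = (\<Prod>i<length z. if z!i \<and> v!i then -1 else 1)"

lemma walsh_xor_left:
  "length x = length y \<Longrightarrow> walsh x v * walsh y v = walsh (xor_bits x y) v"
  unfolding walsh_def by (auto simp: prod.distrib[symmetric] intro!: prod.cong)

lemma walsh_xor_right:
  "length u = length z \<Longrightarrow> length v = length z \<Longrightarrow> walsh z u * walsh z v = walsh z (xor_bits u v)"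
  unfolding walsh_def by (auto simp: prod.distrib[symmetric] intro!: prod.cong)

lemma walsh_sym: "length z = length v \<Longrightarrow> walsh z v = walsh v z"
  unfolding walsh_def by (auto intro!: prod.cong)

lemma walsh_square: "walsh z v * walsh z v = 1"
  unfolding walsh_def prod.distrib[symmetric] by (rule prod.neutral) auto

lemma walsh_zero: "walsh z (replicate (length z) False) = 1"
  unfolding walsh_def by simp

lemma walsh_Cons: "walsh (a # z) (b # v) = (if a \<and> b then -1 else 1) * walsh z v"
  unfolding walsh_def by (simp add: prod.lessThan_Suc_shift del: prod.lessThan_Suc)

lemma walsh_unit_bits:
  assumes "i < n" "length v = n"
  shows "walsh (unit_bits n i) v = (if v!i then -1 else 1)"
proof -
  have "walsh (unit_bits n i) v = (\<Prod>j<n. if j = i then (if v!i then -1 else 1) else 1)"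
    unfolding walsh_def using assms by (intro prod.cong) auto
  also have "\<dots> = (if v!i then -1 else 1)"
    using assms by (simp add: prod.delta)
  finally show ?thesis .
qed

lemma walsh_eq_dot_bits: "length z = length y \<Longrightarrow> walsh z y = (-1) ^ dot_bits y z"
proof -
  assume len: "length z = length y"
  have "walsh z y = (\<Prod>i\<in>{..<length z} \<inter> {i. z!i \<and> y!i}. -1)
                    * (\<Prod>i\<in>{..<length z} \<inter> - {i. z!i \<and> y!i}. 1)"
    unfolding walsh_def by (rule prod.If_cases) simp
  also have "\<dots> = (-1) ^ card ({..<length z} \<inter> {i. z!i \<and> y!i})"
    by simp
  also have "{..<length z} \<inter> {i. z!i \<and> y!i} = {i. i < length y \<and> y!i \<and> z!i}"
    using len by auto
  finally show ?thesis by (simp add: dot_bits_def)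
qed

lemma sum_walsh:
  "length w = n \<Longrightarrow> (\<Sum>z\<in>bitstrings n. walsh z w) = (if w = replicate n False then 2 ^ n else 0)"
proof (induction n arbitrary: w)
  case 0
  then show ?case by (simp add: bitstrings_def walsh_def)
next
  case (Suc n)
  then obtain c w' where w: "w = c # w'" "length w' = n"
    by (auto simp: length_Suc_conv)
  have inj: "inj_on (\<lambda>(b, v). b # v) (UNIV \<times> bitstrings n)"
    by (auto simp: inj_on_def)
  have "(\<Sum>z\<in>bitstrings (Suc n). walsh z w) = (\<Sum>(b, v)\<in>UNIV \<times> bitstrings n. walsh (b # v) w)"
    unfolding bitstrings_Suc by (subst sum.reindex[OF inj]) (simp add: case_prod_unfold)
  also have "\<dots> = (\<Sum>b\<in>UNIV. \<Sum>v\<in>bitstrings n. walsh (b # v) w)"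
    by (rule sum.cartesian_product[symmetric])
  also have "\<dots> = (1 + (if c then -1 else 1)) * (\<Sum>v\<in>bitstrings n. walsh v w')"
    using w by (simp add: UNIV_bool walsh_Cons sum_distrib_left[symmetric] sum_negf algebra_simps)
  finally show ?case
    using Suc.IH[OF w(2)] w by auto
qed

lemma walsh_orthogonal:
  assumes "p \<in> bitstrings n" "q \<in> bitstrings n"
  shows "(\<Sum>z\<in>bitstrings n. walsh z p * walsh z q) = (if p = q then 2 ^ n else 0)"
proof -
  have "(\<Sum>z\<in>bitstrings n. walsh z p * walsh z q) = (\<Sum>z\<in>bitstrings n. walsh z (xor_bits p q))"
    using assms by (intro sum.cong refl walsh_xor_right) (auto simp: bitstrings_def)
  also have "\<dots> = (if xor_bits p q = replicate n False then 2 ^ n else 0)"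
    using assms by (intro sum_walsh) (simp add: bitstrings_def)
  finally show ?thesis
    using xor_bits_eq_zero_iff[of p n q] assms by (simp add: bitstrings_def)
qed

lemma sum_walsh_unit_bits:
  assumes "length v = n"
  shows "(\<Sum>i<n. walsh (unit_bits n i) v) = real n - 2 * real (weight v)"
proof -
  have "(\<Sum>i<n. walsh (unit_bits n i) v) = (\<Sum>i<n. 1 - 2 * (if v!i then 1 else 0))"
    using assms by (intro sum.cong) (auto simp: walsh_unit_bits)
  also have "\<dots> = real n - 2 * (\<Sum>i<n. (if v!i then 1 else 0))"
    by (simp add: sum_subtractf sum_distrib_left)
  also have "(\<Sum>i<n. (if v!i then 1 else 0)::real) = real (card {i\<in>{..<n}. v!i})"
    by (simp add: sum.inter_filter[symmetric])
  also have "{i\<in>{..<n}. v!i} = {i. i < length v \<and> v!i}"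
    using assms by auto
  finally show ?thesis by (simp add: weight_def)
qed

section \<open>Query phases\<close>

fun query_parity :: "nat \<Rightarrow> nat list \<Rightarrow> bool list" where
  "query_parity n [] = replicate n False"
| "query_parity n (i # js) =
     (if i = 0 then query_parity n js else xor_bits (unit_bits n (i - 1)) (query_parity n js))"

lemma length_query_parity [simp]: "length (query_parity n js) = n"
  by (induction js) auto

lemma query_parity_in_bitstrings: "query_parity n js \<in> bitstrings n"
  by (simp add: bitstrings_def)

lemma weight_query_parity_le: "weight (query_parity n js) \<le> length js"
proof (induction js)
  case Nil
  then show ?case by (simp add: weight_def)
next
  case (Cons i js)
  show ?case
  proof (cases "i = 0")
    case True
    then show ?thesis using Cons.IH by simp
  next
    case False
    then have "weight (query_parity n (i # js))
                 = weight (xor_bits (unit_bits n (i - 1)) (query_parity n js))"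
      by simp
    also have "\<dots> \<le> weight (unit_bits n (i - 1)) + weight (query_parity n js)"
      by (rule weight_xor_le) simp
    also have "\<dots> \<le> 1 + length js"
      using weight_unit_bits_le[of n "i - 1"] Cons.IH by linarith
    finally show ?thesis by simp
  qed
qed

lemma query_phase_eq_walsh:
  "length x = n \<Longrightarrow> set js \<subseteq> {0..n} \<Longrightarrow> query_phase x js = of_real (walsh x (query_parity n js))"
proof (induction js)
  case Nil
  then show ?case using walsh_zero[of x] by (simp add: query_phase_def)
next
  case (Cons i js)
  have IH: "query_phase x js = of_real (walsh x (query_parity n js))"
    using Cons by auto
  have phase_Cons: "query_phase x (i # js) = (if oracle_bit x i then -1 else 1) * query_phase x js"
    by (simp add: query_phase_def)
  show ?case
  proof (cases "i = 0")
    case True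
    then show ?thesis using phase_Cons IH by (simp add: oracle_bit_def)
  next
    case False
    with Cons.prems have i: "i - 1 < n" and len: "length x = n" by auto
    have "walsh x (query_parity n (i # js))
            = walsh x (unit_bits n (i - 1)) * walsh x (query_parity n js)"
      using False len by (simp add: walsh_xor_right)
    also have "walsh x (unit_bits n (i - 1)) = (if oracle_bit x i then -1 else 1)"
      using False walsh_sym[of x "unit_bits n (i - 1)"] walsh_unit_bits[OF i len] len
      by (simp add: oracle_bit_def)
    finally show ?thesis using phase_Cons IH by simp
  qed
qed

section \<open>Linear algebra of exact measurements\<close>

lemma finite_idx: "finite (idx n k m)"
proof -
  have "idx n k m \<subseteq> {js. set js \<subseteq> {0..n} \<and> length js = k} \<times> {..<m}"
    unfolding idx_def by auto
  then show ?thesis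
    by (rule finite_subset) (intro finite_SigmaI finite_lists_length_eq, auto)
qed

lemma cnj_mult_self: "cnj z * z = of_real ((cmod z)\<^sup>2)"
  by (subst complex_norm_square) (rule mult.commute)

lemma qform_gram:
  assumes "finite I" "finite Y"
  shows "qform I (\<lambda>a b. \<Sum>y\<in>Y. cnj (u y a) * u y b) v
           = of_real (\<Sum>y\<in>Y. (cmod (\<Sum>b\<in>I. u y b * v b))\<^sup>2)"
proof -
  have "qform I (\<lambda>a b. \<Sum>y\<in>Y. cnj (u y a) * u y b) v
          = (\<Sum>a\<in>I. \<Sum>b\<in>I. \<Sum>y\<in>Y. cnj (u y a) * cnj (v a) * (u y b * v b))"
    unfolding qform_def by (simp add: sum_distrib_left sum_distrib_right ac_simps)
  also have "\<dots> = (\<Sum>a\<in>I. \<Sum>y\<in>Y. \<Sum>b\<in>I. cnj (u y a) * cnj (v a) * (u y b * v b))"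
    by (intro sum.cong refl sum.swap)
  also have "\<dots> = (\<Sum>y\<in>Y. \<Sum>a\<in>I. \<Sum>b\<in>I. cnj (u y a) * cnj (v a) * (u y b * v b))"
    by (rule sum.swap)
  also have "\<dots> = (\<Sum>y\<in>Y. of_real ((cmod (\<Sum>b\<in>I. u y b * v b))\<^sup>2))"
  proof (intro sum.cong refl)
    fix y
    have "of_real ((cmod (\<Sum>b\<in>I. u y b * v b))\<^sup>2)
            = cnj (\<Sum>b\<in>I. u y b * v b) * (\<Sum>b\<in>I. u y b * v b)"
      by (rule cnj_mult_self[symmetric])
    also have "\<dots> = (\<Sum>a\<in>I. cnj (u y a) * cnj (v a)) * (\<Sum>b\<in>I. u y b * v b)"
      by simp
    finally have "of_real ((cmod (\<Sum>b\<in>I. u y b * v b))\<^sup>2)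
            = (\<Sum>a\<in>I. cnj (u y a) * cnj (v a)) * (\<Sum>b\<in>I. u y b * v b)" .
    then show "(\<Sum>a\<in>I. \<Sum>b\<in>I. cnj (u y a) * cnj (v a) * (u y b * v b))
                 = of_real ((cmod (\<Sum>b\<in>I. u y b * v b))\<^sup>2)"
      by (simp add: sum_product)
  qed
  finally show ?thesis by simp
qed

lemma povm_effect_subfamily:
  assumes fin: "finite I" "finite Y0" and sub: "Y \<subseteq> Y0"
    and complete: "\<And>a b. (\<Sum>y\<in>Y0. cnj (u y a) * u y b) = (if a \<in> T \<and> a = b then 1 else 0)"
  shows "povm_effect I (\<lambda>a b. \<Sum>y\<in>Y. cnj (u y a) * u y b)"
  unfolding povm_effect_def
proof (intro allI conjI)
  fix v
  define G where "G Y' = (\<Sum>y\<in>Y'. (cmod (\<Sum>b\<in>I. u y b * v b))\<^sup>2)" for Y'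
  have finY: "finite Y" using sub fin(2) by (rule finite_subset)
  have q: "qform I (\<lambda>a b. \<Sum>y\<in>Y. cnj (u y a) * u y b) v = of_real (G Y)"
    unfolding G_def by (rule qform_gram[OF fin(1) finY])
  have "of_real (G Y0) = qform I (\<lambda>a b. \<Sum>y\<in>Y0. cnj (u y a) * u y b) v"
    unfolding G_def by (rule qform_gram[OF fin, symmetric])
  also have "\<dots> = (\<Sum>a\<in>I. if a \<in> T then cnj (v a) * v a else 0)"
    unfolding qform_def complete using fin(1)
    by (intro sum.cong refl) (simp add: if_distrib if_distribR sum.delta cong: if_cong)
  also have "\<dots> = of_real (\<Sum>a\<in>I. if a \<in> T then (cmod (v a))\<^sup>2 else 0)"
    by (simp add: cnj_mult_self if_distrib[of "of_real"] cong: if_cong)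
  finally have "G Y0 = (\<Sum>a\<in>I. if a \<in> T then (cmod (v a))\<^sup>2 else 0)"
    using of_real_eq_iff by blast
  also have "\<dots> \<le> sq_norm I v"
    unfolding sq_norm_def by (intro sum_mono) auto
  finally have "G Y0 \<le> sq_norm I v" .
  moreover have "G Y \<le> G Y0"
    unfolding G_def by (intro sum_mono2 fin sub) auto
  ultimately show "Re (qform I (\<lambda>a b. \<Sum>y\<in>Y. cnj (u y a) * u y b) v) \<le> sq_norm I v"
    using q by simp
  show "qform I (\<lambda>a b. \<Sum>y\<in>Y. cnj (u y a) * u y b) v \<in> \<real>"
    using q by simp
  show "0 \<le> Re (qform I (\<lambda>a b. \<Sum>y\<in>Y. cnj (u y a) * u y b) v)"
    using q unfolding G_def by (simp add: sum_nonneg)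
qed

lemma qform_add:
  "qform I M (\<lambda>a. u a + t * w a)
     = qform I M u + t * (\<Sum>a\<in>I. \<Sum>b\<in>I. cnj (u a) * M a b * w b)
       + cnj t * (\<Sum>a\<in>I. \<Sum>b\<in>I. cnj (w a) * M a b * u b) + cnj t * t * qform I M w"
proof -
  have expand: "cnj (u a + t * w a) * M a b * (u b + t * w b)
     = cnj (u a) * M a b * u b + t * (cnj (u a) * M a b * w b)
       + cnj t * (cnj (w a) * M a b * u b) + cnj t * t * (cnj (w a) * M a b * w b)" for a b
    by (simp add: algebra_simps)
  show ?thesis
    unfolding qform_def expand by (simp only: sum.distrib sum_distrib_left[symmetric])
qed

lemma sq_norm_add:
  "sq_norm I (\<lambda>a. u a + t * w a)
     = sq_norm I u + 2 * Re (t * (\<Sum>a\<in>I. cnj (u a) * w a)) + (cmod t)\<^sup>2 * sq_norm I w"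
proof -
  have "(cmod (x + t * y))\<^sup>2 = (cmod x)\<^sup>2 + 2 * Re (t * (cnj x * y)) + (cmod t)\<^sup>2 * (cmod y)\<^sup>2"
    for x y
    unfolding cmod_power2 by (simp add: power2_eq_square algebra_simps)
  then show ?thesis
    unfolding sq_norm_def by (simp add: sum.distrib sum_distrib_left Re_sum)
qed

text \<open>The cross term X t of the quadratic form on u + t w is real
  linear in t and bounded below, hence zero; the upper bound of the effect
  then gives 1 \<le> |u - <u,w> w|^2 = 1 - |<u,w>|^2.\<close>

lemma exact_outcomes_orthogonal:
  assumes povm: "povm_effect I M" and one: "Re (qform I M u) = 1" and zero: "Re (qform I M w) = 0"
    and unit: "sq_norm I u = 1" "sq_norm I w = 1"
  shows "(\<Sum>a\<in>I. cnj (u a) * w a) = 0"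
proof -
  define d where "d = (\<Sum>a\<in>I. cnj (u a) * w a)"
  define X where "X t = Re (t * (\<Sum>a\<in>I. \<Sum>b\<in>I. cnj (u a) * M a b * w b)
                          + cnj t * (\<Sum>a\<in>I. \<Sum>b\<in>I. cnj (w a) * M a b * u b))" for t
  have qform_line: "Re (qform I M (\<lambda>a. u a + t * w a)) = 1 + X t" for t
    unfolding qform_add X_def cnj_mult_self using one zero by simp
  have bounds: "0 \<le> Re (qform I M v)" "Re (qform I M v) \<le> sq_norm I v" for v
    using povm unfolding povm_effect_def by auto
  have X_scale: "X (of_real s * t) = s * X t" for s t
    unfolding X_def by (simp add: algebra_simps)
  have line_nonneg: "0 \<le> 1 + X t" for t
    using bounds(1)[of "\<lambda>a. u a + t * w a"] qform_line[of t] by simp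
  have X_nonneg: "0 \<le> X t" for t
  proof (rule ccontr)
    assume "\<not> 0 \<le> X t"
    then have "X (of_real (2 / - X t) * t) = -2"
      unfolding X_scale by simp
    then show False
      using line_nonneg[of "of_real (2 / - X t) * t"] by simp
  qed
  have X_odd: "X (- t) = - X t" for t
    unfolding X_def by simp
  have X_zero: "X t = 0" for t
    using X_nonneg[of t] X_nonneg[of "- t"] X_odd[of t] by simp
  have "1 \<le> sq_norm I (\<lambda>a. u a + (- cnj d) * w a)"
    using bounds(2)[of "\<lambda>a. u a + (- cnj d) * w a"] qform_line[of "- cnj d"] X_zero[of "- cnj d"]
    by simp
  also have "\<dots> = 1 - (cmod d)\<^sup>2"
    unfolding sq_norm_add d_def[symmetric] using unit cmod_power2[of d]
    by (simp add: cnj_mult_self[of d, simplified mult.commute] complex_mod_cnj power2_eq_square)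
  finally show ?thesis
    unfolding d_def[symmetric] by simp
qed

section \<open>An exact algorithm always exists\<close>

definition subset_query :: "nat \<Rightarrow> bool list \<Rightarrow> nat list \<times> nat" where
  "subset_query n b = (map (\<lambda>j. if b!j then Suc j else 0) [0..<n], 0)"

lemma subset_query_idx: "length b = n \<Longrightarrow> subset_query n b \<in> idx n n 1"
  unfolding idx_def subset_query_def by auto

lemma inj_subset_query: "inj_on (subset_query n) (bitstrings n)"
proof (rule inj_onI)
  fix p q assume p: "p \<in> bitstrings n" and q: "q \<in> bitstrings n"
    and eq: "subset_query n p = subset_query n q"
  show "p = q"
  proof (rule nth_equalityI)
    show "length p = length q" using p q by (simp add: bitstrings_def)
  next
    fix j assume "j < length p"
    then have "j < n" using p by (simp add: bitstrings_def)
    then have entry: "fst (subset_query n b) ! j = (if b!j then Suc j else 0)" for b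
      by (simp add: subset_query_def)
    show "p!j = q!j"
      using arg_cong[OF eq, of "\<lambda>a. fst a ! j"] unfolding entry by (auto split: if_splits)
  qed
qed

lemma query_phase_subset_query:
  assumes "length x = n" "length b = n"
  shows "query_phase x (fst (subset_query n b)) = of_real (walsh x b)"
proof -
  have "query_phase x (fst (subset_query n b))
          = (\<Prod>j\<in>{0..<n}. (if oracle_bit x (if b!j then Suc j else 0) then -1 else 1))"
    unfolding query_phase_def subset_query_def
    by (simp add: comp_def prod.distinct_set_conv_list[symmetric])
  also have "\<dots> = (\<Prod>j<n. of_real (if x!j \<and> b!j then -1 else 1))"
    by (intro prod.cong) (auto simp: oracle_bit_def)
  also have "\<dots> = of_real (walsh x b)"
    unfolding walsh_def using assms by simp
  finally show ?thesis .
qed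

text \<open>The uniform superposition over all subset queries turns input x into
  its Hadamard vector; these vectors are orthonormal, so projecting onto those
  with f = 1 computes f exactly with n queries.\<close>

lemma exact_algorithm_exists: "\<exists>k m \<psi> M. na_exact_computes n f k m \<psi> M"
proof -
  define I where "I = idx n n 1"
  define T where "T = subset_query n ` bitstrings n"
  define c :: complex where "c = of_real (1 / sqrt (2 ^ n))"
  define \<psi> where "\<psi> a = (if a \<in> T then c else 0)" for a
  define h where "h x = query_state x \<psi>" for x
  define Y where "Y = {y \<in> bitstrings n. f y}"
  define M where "M a b = (\<Sum>y\<in>Y. cnj (h y a) * h y b)" for a b
  have finI: "finite I" unfolding I_def by (rule finite_idx)
  have TI: "T \<subseteq> I"
    unfolding T_def I_def using subset_query_idx by (auto simp: bitstrings_def)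
  have cc: "cnj c * c = of_real (1 / 2 ^ n)" "c * c = of_real (1 / 2 ^ n)"
    unfolding c_def by (simp_all flip: of_real_mult add: real_sqrt_mult[symmetric])
  have sum_T: "(\<Sum>a\<in>I. F a) = (\<Sum>b\<in>bitstrings n. F (subset_query n b))"
    if "\<forall>a\<in>I - T. F a = 0" for F :: "_ \<Rightarrow> complex"
  proof -
    have "(\<Sum>a\<in>I. F a) = (\<Sum>a\<in>T. F a)"
      using that by (intro sum.mono_neutral_right finI TI) auto
    also have "\<dots> = (\<Sum>b\<in>bitstrings n. F (subset_query n b))"
      unfolding T_def by (rule sum.reindex[OF inj_subset_query, unfolded comp_def])
    finally show ?thesis .
  qed
  have h_T: "h x (subset_query n b) = of_real (walsh x b) * c"
    if "x \<in> bitstrings n" "b \<in> bitstrings n" for x b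
    using that query_phase_subset_query[of x n b]
    unfolding h_def query_state_def \<psi>_def T_def
    by (auto simp: bitstrings_def subset_query_def)
  have h_outside: "h x a = 0" if "a \<notin> T" for x a
    using that unfolding h_def query_state_def \<psi>_def by (auto split: prod.split)
  have norm: "sq_norm I \<psi> = 1"
  proof -
    have "of_real (sq_norm I \<psi>) = (\<Sum>a\<in>I. cnj (\<psi> a) * \<psi> a)"
      unfolding sq_norm_def by (simp add: cnj_mult_self)
    also have "\<dots> = (\<Sum>b\<in>bitstrings n. cnj c * c)"
      by (subst sum_T) (auto simp: \<psi>_def T_def)
    also have "\<dots> = 1"
      by (simp add: cc card_bitstrings)
    finally show ?thesis by simp
  qed
  have complete: "(\<Sum>y\<in>bitstrings n. cnj (h y a) * h y b) = (if a \<in> T \<and> a = b then 1 else 0)"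
    for a b
  proof (cases "a \<in> T \<and> b \<in> T")
    case True
    then obtain p q where pq: "p \<in> bitstrings n" "q \<in> bitstrings n"
      "a = subset_query n p" "b = subset_query n q"
      unfolding T_def by auto
    have "(\<Sum>y\<in>bitstrings n. cnj (h y a) * h y b)
            = (\<Sum>y\<in>bitstrings n. of_real (walsh y p * walsh y q) * (cnj c * c))"
      using pq by (intro sum.cong refl) (simp add: h_T)
    also have "\<dots> = of_real (\<Sum>y\<in>bitstrings n. walsh y p * walsh y q) * (cnj c * c)"
      by (simp add: sum_distrib_right)
    also have "\<dots> = (if p = q then 1 else 0)"
      unfolding walsh_orthogonal[OF pq(1,2)] cc by simp
    also have "(p = q) = (a = b)"
      using pq inj_subset_query[of n] by (auto simp: inj_on_def)
    finally show ?thesis using True by simp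
  next
    case False
    then show ?thesis by (auto simp: h_outside)
  qed
  have povm: "povm_effect I M"
    unfolding M_def by (rule povm_effect_subfamily[OF finI finite_bitstrings _ complete])
      (auto simp: Y_def)
  have prob: "prob_one I M (h x) = (if f x then 1 else 0)" if x: "x \<in> bitstrings n" for x
  proof -
    have overlap: "(\<Sum>b\<in>I. h y b * h x b) = (if y = x then 1 else 0)" if y: "y \<in> bitstrings n" for y
    proof -
      have "(\<Sum>b\<in>I. h y b * h x b) = (\<Sum>p\<in>bitstrings n. h y (subset_query n p) * h x (subset_query n p))"
        by (rule sum_T) (simp add: h_outside)
      also have "\<dots> = (\<Sum>p\<in>bitstrings n. of_real (walsh p y * walsh p x) * (c * c))"
      proof (intro sum.cong refl)
        fix p assume p: "p \<in> bitstrings n"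
        have "walsh y p = walsh p y" "walsh x p = walsh p x"
          using p x y by (auto intro!: walsh_sym simp: bitstrings_def)
        then show "h y (subset_query n p) * h x (subset_query n p) = of_real (walsh p y * walsh p x) * (c * c)"
          using p x y by (simp add: h_T)
      qed
      also have "\<dots> = of_real (\<Sum>p\<in>bitstrings n. walsh p y * walsh p x) * (c * c)"
        by (simp add: sum_distrib_right)
      also have "\<dots> = (if y = x then 1 else 0)"
        unfolding walsh_orthogonal[OF y x] cc by simp
      finally show ?thesis .
    qed
    have "qform I M (h x) = of_real (\<Sum>y\<in>Y. (cmod (\<Sum>b\<in>I. h y b * h x b))\<^sup>2)"
      unfolding M_def by (rule qform_gram[OF finI]) (simp add: Y_def)
    also have "\<dots> = of_real (\<Sum>y\<in>Y. if y = x then 1 else 0)"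
      by (intro arg_cong[where f=of_real] sum.cong refl) (simp add: Y_def overlap)
    also have "\<dots> = (if f x then 1 else 0)"
      using x by (simp add: Y_def)
    finally show ?thesis unfolding prob_one_def by simp
  qed
  have "na_exact_computes n f n 1 \<psi> M"
    unfolding na_exact_computes_def I_def[symmetric] h_def[symmetric] using norm povm prob by auto
  then show ?thesis by blast
qed

lemma QE_na_attained: "\<exists>m \<psi> M. na_exact_computes n f (QE_na n f) m \<psi> M"
  unfolding QE_na_def by (rule LeastI_ex) (rule exact_algorithm_exists)

section \<open>Analysis of an exact nonadaptive algorithm\<close>

locale exact_na_algorithm =
  fixes n :: nat and f :: "bool list \<Rightarrow> bool" and k m :: nat
    and \<psi> :: "nat list \<times> nat \<Rightarrow> complex"
    and M :: "nat list \<times> nat \<Rightarrow> nat list \<times> nat \<Rightarrow> complex"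
  assumes computes: "na_exact_computes n f k m \<psi> M"
begin

abbreviation I :: "(nat list \<times> nat) set" where
  "I \<equiv> idx n k m"

definition basis_prob :: "nat list \<times> nat \<Rightarrow> real" where
  "basis_prob a = (cmod (\<psi> a))\<^sup>2"

definition parity :: "nat list \<times> nat \<Rightarrow> bool list" where
  "parity a = query_parity n (fst a)"

definition parity_dist :: "bool list \<Rightarrow> real" where
  "parity_dist v = (\<Sum>a\<in>I. if parity a = v then basis_prob a else 0)"

definition correlation :: "bool list \<Rightarrow> real" where
  "correlation z = (\<Sum>a\<in>I. basis_prob a * walsh z (parity a))"

lemma basis_prob_nonneg: "0 \<le> basis_prob a"
  by (simp add: basis_prob_def)

lemma parity_in_bitstrings: "parity a \<in> bitstrings n"
  by (simp add: parity_def query_parity_in_bitstrings)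

lemma query_state_eq:
  assumes "x \<in> bitstrings n" "a \<in> I"
  shows "query_state x \<psi> a = of_real (walsh x (parity a)) * \<psi> a"
  using assms query_phase_eq_walsh[of x n "fst a"]
  by (auto simp: query_state_def parity_def idx_def bitstrings_def split: prod.split)

lemma query_state_unit: "x \<in> bitstrings n \<Longrightarrow> sq_norm I (query_state x \<psi>) = 1"
proof -
  assume x: "x \<in> bitstrings n"
  have "sq_norm I (query_state x \<psi>) = sq_norm I \<psi>"
    unfolding sq_norm_def
  proof (intro sum.cong refl)
    fix a assume "a \<in> I"
    then have "(cmod (query_state x \<psi> a))\<^sup>2
                 = (walsh x (parity a) * walsh x (parity a)) * (cmod (\<psi> a))\<^sup>2"
      using x by (simp add: query_state_eq norm_mult power2_eq_square)
    then show "(cmod (query_state x \<psi> a))\<^sup>2 = (cmod (\<psi> a))\<^sup>2"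
      by (simp add: walsh_square)
  qed
  then show ?thesis
    using computes by (simp add: na_exact_computes_def)
qed

lemma overlap_query_states:
  assumes x: "x \<in> bitstrings n" and y: "y \<in> bitstrings n"
  shows "(\<Sum>a\<in>I. cnj (query_state x \<psi> a) * query_state y \<psi> a) = of_real (correlation (xor_bits x y))"
  unfolding correlation_def of_real_sum
proof (intro sum.cong refl)
  fix a assume a: "a \<in> I"
  have "cnj (query_state x \<psi> a) * query_state y \<psi> a
          = of_real (walsh x (parity a) * walsh y (parity a)) * (cnj (\<psi> a) * \<psi> a)"
    using x y a by (simp add: query_state_eq)
  also have "walsh x (parity a) * walsh y (parity a) = walsh (xor_bits x y) (parity a)"
    using x y by (intro walsh_xor_left) (simp add: bitstrings_def)
  finally show "cnj (query_state x \<psi> a) * query_state y \<psi> a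
                  = of_real (basis_prob a * walsh (xor_bits x y) (parity a))"
    by (simp add: basis_prob_def cnj_mult_self)
qed

lemma correlation_outside_symmetries:
  assumes z: "z \<in> bitstrings n" "z \<notin> S_f n f"
  shows "correlation z = 0"
proof -
  obtain x where x: "x \<in> bitstrings n" and differ: "f x \<noteq> f (xor_bits x z)"
    using z unfolding S_f_def by auto
  define y where "y = xor_bits x z"
  have y: "y \<in> bitstrings n"
    unfolding y_def using x z(1) by (rule xor_bits_in_bitstrings)
  have xy: "xor_bits x y = z"
    using x z unfolding y_def bitstrings_def by (simp add: xor_bits_cancel)
  have outcome: "Re (qform I M (query_state w \<psi>)) = (if f w then 1 else 0)"
    if "w \<in> bitstrings n" for w
    using computes that unfolding na_exact_computes_def prob_one_def by auto
  have povm: "povm_effect I M"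
    using computes by (simp add: na_exact_computes_def)
  have orthogonal: "(\<Sum>a\<in>I. cnj (query_state u \<psi> a) * query_state w \<psi> a) = 0"
    if "u \<in> bitstrings n" "w \<in> bitstrings n" "f u" "\<not> f w" for u w
    using that by (intro exact_outcomes_orthogonal[OF povm]) (simp_all add: outcome query_state_unit)
  show ?thesis
  proof (cases "f x")
    case True
    then show ?thesis
      using orthogonal[OF x y] overlap_query_states[OF x y] differ xy by (simp add: y_def)
  next
    case False
    then show ?thesis
      using orthogonal[OF y x] overlap_query_states[OF y x] differ xy
      by (simp add: y_def xor_bits_comm)
  qed
qed

lemma fourier_inversion:
  assumes v: "v \<in> bitstrings n"
  shows "(\<Sum>z\<in>bitstrings n. correlation z * walsh z v) = 2 ^ n * parity_dist v"
proof -
  have "(\<Sum>z\<in>bitstrings n. correlation z * walsh z v)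
          = (\<Sum>z\<in>bitstrings n. \<Sum>a\<in>I. basis_prob a * (walsh z (parity a) * walsh z v))"
    unfolding correlation_def by (simp add: sum_distrib_right mult.assoc)
  also have "\<dots> = (\<Sum>a\<in>I. basis_prob a * (\<Sum>z\<in>bitstrings n. walsh z (parity a) * walsh z v))"
    by (subst sum.swap) (simp add: sum_distrib_left)
  also have "\<dots> = (\<Sum>a\<in>I. basis_prob a * (if parity a = v then 2 ^ n else 0))"
    by (intro sum.cong refl) (simp add: walsh_orthogonal[OF parity_in_bitstrings v])
  also have "\<dots> = 2 ^ n * parity_dist v"
    unfolding parity_dist_def sum_distrib_left by (intro sum.cong refl) simp
  finally show ?thesis .
qed

text \<open>Since the correlation is supported on S_f, the parity distribution is
  invariant under translations by S_f^perp.\<close>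

lemma parity_dist_translation_invariant:
  assumes x: "x \<in> bitstrings n" and y: "y \<in> perp n (S_f n f)"
  shows "parity_dist (xor_bits x y) = parity_dist x"
proof -
  have y_bs: "y \<in> bitstrings n"
    using y unfolding perp_def by auto
  have S_sub: "S_f n f \<subseteq> bitstrings n"
    unfolding S_f_def by auto
  have on_S: "(\<Sum>z\<in>bitstrings n. correlation z * walsh z v) = (\<Sum>z\<in>S_f n f. correlation z * walsh z v)"
    for v
    by (rule sum.mono_neutral_right[OF finite_bitstrings S_sub])
      (auto simp: correlation_outside_symmetries)
  have "(\<Sum>z\<in>S_f n f. correlation z * walsh z (xor_bits x y)) = (\<Sum>z\<in>S_f n f. correlation z * walsh z x)"
  proof (intro sum.cong refl)
    fix z assume z: "z \<in> S_f n f"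
    then have z_bs: "z \<in> bitstrings n" using S_sub by auto
    have "walsh z y = (-1) ^ dot_bits y z"
      using z_bs y_bs by (intro walsh_eq_dot_bits) (simp add: bitstrings_def)
    also have "\<dots> = 1"
      using y z unfolding perp_def by auto
    finally have "walsh z y = 1" .
    moreover have "walsh z x * walsh z y = walsh z (xor_bits x y)"
      using z_bs x y_bs by (intro walsh_xor_right) (simp_all add: bitstrings_def)
    ultimately show "correlation z * walsh z (xor_bits x y) = correlation z * walsh z x"
      by simp
  qed
  then have "2 ^ n * parity_dist (xor_bits x y) = 2 ^ n * parity_dist x"
    using fourier_inversion[OF xor_bits_in_bitstrings[OF x y_bs]] fourier_inversion[OF x] on_S
    by simp
  then show ?thesis by simp
qed

lemma parity_dist_pos_iff: "0 < parity_dist v \<longleftrightarrow> (\<exists>a\<in>I. parity a = v \<and> 0 < basis_prob a)"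
proof
  assume pos: "0 < parity_dist v"
  show "\<exists>a\<in>I. parity a = v \<and> 0 < basis_prob a"
  proof (rule ccontr)
    assume "\<not> ?thesis"
    then have "\<forall>a\<in>I. (if parity a = v then basis_prob a else 0) = 0"
      using basis_prob_nonneg by (simp add: not_less order_antisym)
    then have "parity_dist v = 0"
      unfolding parity_dist_def by (rule sum.neutral)
    then show False using pos by simp
  qed
next
  assume "\<exists>a\<in>I. parity a = v \<and> 0 < basis_prob a"
  then obtain a where a: "a \<in> I" "parity a = v" "0 < basis_prob a" by blast
  have "basis_prob a \<le> parity_dist v"
    unfolding parity_dist_def
    using member_le_sum[OF a(1), of "\<lambda>a. if parity a = v then basis_prob a else 0"] a
    by (simp add: basis_prob_nonneg finite_idx)
  then show "0 < parity_dist v" using a(3) by simp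
qed

lemma support_nonempty: "\<exists>a\<in>I. 0 < basis_prob a"
proof (rule ccontr)
  assume "\<not> ?thesis"
  then have "\<forall>a\<in>I. basis_prob a = 0"
    using basis_prob_nonneg by (simp add: not_less order_antisym)
  then have "(\<Sum>a\<in>I. basis_prob a) = 0"
    by (rule sum.neutral)
  moreover have "(\<Sum>a\<in>I. basis_prob a) = 1"
    using computes by (simp add: na_exact_computes_def sq_norm_def basis_prob_def)
  ultimately show False by simp
qed

text \<open>With n = 2k queries against a function depending on all bits, every
  parity in the support has weight exactly k: the correlations at the unit
  vectors vanish, and summing them gives a sum of nonnegative terms.\<close>

lemma support_balanced:
  assumes all: "depends_on_all n f" and n: "n = 2 * k"
    and a: "a \<in> I" "0 < basis_prob a"
  shows "2 * weight (parity a) = n"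
proof -
  have unit_not_symmetry: "unit_bits n i \<notin> S_f n f" if "i < n" for i
    using all that unfolding depends_on_all_def depends_on_def S_f_def by auto
  have "(\<Sum>b\<in>I. basis_prob b * (real n - 2 * real (weight (parity b))))
          = (\<Sum>b\<in>I. basis_prob b * (\<Sum>i<n. walsh (unit_bits n i) (parity b)))"
    using parity_in_bitstrings by (simp add: sum_walsh_unit_bits bitstrings_def)
  also have "\<dots> = (\<Sum>i<n. correlation (unit_bits n i))"
    unfolding correlation_def sum_distrib_left by (rule sum.swap)
  also have "\<dots> = 0"
    by (intro sum.neutral ballI correlation_outside_symmetries unit_not_symmetry)
      (auto simp: bitstrings_def)
  finally have sum_zero: "(\<Sum>b\<in>I. basis_prob b * (real n - 2 * real (weight (parity b)))) = 0" .
  have term_nonneg: "0 \<le> basis_prob b * (real n - 2 * real (weight (parity b)))" if "b \<in> I" for b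
  proof -
    have "weight (parity b) \<le> k"
      using that weight_query_parity_le[of n "fst b"] by (auto simp: parity_def idx_def)
    then show ?thesis
      using n basis_prob_nonneg[of b] by simp
  qed
  have "\<forall>b\<in>I. basis_prob b * (real n - 2 * real (weight (parity b))) = 0"
    using sum_nonneg_eq_0_iff[OF finite_idx term_nonneg] sum_zero by simp
  then have "basis_prob a * (real n - 2 * real (weight (parity a))) = 0"
    using a(1) by blast
  then show ?thesis
    using a(2) by simp
qed

lemma balanced_point:
  assumes "depends_on_all n f" "n = 2 * k"
  shows "\<exists>x\<in>bitstrings n. \<forall>y\<in>perp n (S_f n f). 2 * hamming x y = n"
proof -
  obtain a0 where a0: "a0 \<in> I" "0 < basis_prob a0"
    using support_nonempty by blast
  define x where "x = parity a0"
  have x: "x \<in> bitstrings n" and pos: "0 < parity_dist x"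
    using a0 parity_dist_pos_iff unfolding x_def by (auto simp: parity_in_bitstrings)
  have "2 * hamming x y = n" if y: "y \<in> perp n (S_f n f)" for y
  proof -
    have "0 < parity_dist (xor_bits x y)"
      using pos parity_dist_translation_invariant[OF x y] by simp
    then obtain a where a: "a \<in> I" "parity a = xor_bits x y" "0 < basis_prob a"
      using parity_dist_pos_iff by blast
    have "hamming x y = weight (xor_bits x y)"
      using x y by (intro hamming_eq_weight) (auto simp: perp_def bitstrings_def)
    then show ?thesis
      using support_balanced[OF assms a(1,3)] a(2) by simp
  qed
  then show ?thesis using x by blast
qed

end

theorem corollary7p6:
  fixes n :: nat and f :: "bool list \<Rightarrow> bool"
  assumes "depends_on_all n f"
    and "real (QE_na n f) = real n / 2"
  shows "\<exists>x\<in>bitstrings n. \<forall>y\<in>perp n (S_f n f). real (hamming x y) = real n / 2"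
proof -
  obtain m \<psi> M where "na_exact_computes n f (QE_na n f) m \<psi> M"
    using QE_na_attained by blast
  then interpret exact_na_algorithm n f "QE_na n f" m \<psi> M
    by unfold_locales
  have "n = 2 * QE_na n f"
    using assms(2) by linarith
  then obtain x where "x \<in> bitstrings n" "\<forall>y\<in>perp n (S_f n f). 2 * hamming x y = n"
    using balanced_point[OF assms(1)] by blast
  then show ?thesis by force
qed

end
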